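(* Let $U$ be a compact metric space, $X\subset\mathbb R^N$ compact, $T:U\to U$ surjective, and $g:U\times X\to X$ a continuous driven system that is SI-invertible and has the unique solution property. Let $H_2:\widehat U_T\to Y_T\subset\mathbb R^N\times\mathbb R^N$, $H_2(\overleftarrow u)=(h(r\overleftarrow u),h(\overleftarrow u))$, and for $i=1,\ldots,N$ let $\pi_i:\mathbb R^N\times\mathbb R^N\to\mathbb R^2$, $\pi_i(y,z)=(y^i,z^i)$, and $f_i:=\pi_i\circ H_2:\widehat U_T\to\mathbb R^2$. Let $\mathcal K$ be the Koopman operator of $\widehat T$, i.e. $\mathcal K f=f\circ\widehat T$. Then for each $i=1,\ldots,N$, $$\mathcal K f_i=\pi_i\circ G_T\circ H_2 .$$
   Context: An orbit of $T$ is a bi-infinite sequence $\{u_n\}$ with $u_{n+1}=Tu_n$. A solution of $g$ for an input $\{u_n\}_{n\in\mathbb Z}\subset U$ is a sequence $\{x_n\}_{n\in\mathbb Z}\subset X$ with $x_{n+1}=g(u_n,x_n)$. $g$ is SI-invertible if $g(\cdot,x)$ is injective for each $x$; $g$ has the unique solution property if each input has exactly one solution. $\overleftarrow U$ is the space of left-infinite sequences $(\ldots,u_{-2},u_{-1})$ in $U$ with the product topology; $r(\ldots,u_{-3},u_{-2},u_{-1})=(\ldots,u_{-3},u_{-2})$. Under the unique solution property, $h:\overleftarrow U\to X$ is defined by $h(\ldots,u_{-2},u_{-1})=x_0$ where $\{x_n\}$ is the unique solution for any bi-infinite input extending $(\ldots,u_{-2},u_{-1})$ (this depends only on the left-infinite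 part). The inverse-limit space is $\widehat U_T=\{(\ldots,u_{-2},u_{-1}):Tu_n=u_{n+1}\}$ with $\widehat T(\ldots,u_{-2},u_{-1})=(\ldots,u_{-2},u_{-1},Tu_{-1})$. $Y_T=\{(x_{n-1},x_n):\{x_k\}\text{ a solution of }g\text{ for some orbit of }T,\ n\in\mathbb Z\}$ and $G_T:Y_T\to Y_T$ is the map $(x_{n-1},x_n)\mapsto(x_n,x_{n+1})$ along such solutions. *)

theory Defs
  imports "HOL-Analysis.Analysis"
begin

text \<open>Bi-infinite sequences are functions int => _. Left-infinite sequences
(..., u_{-2}, u_{-1}) are functions s :: nat => _ with s k = u_{-(k+1)}.\<close>

definition is_solution :: "('u \<Rightarrow> 'x \<Rightarrow> 'x) \<Rightarrow> 'x set \<Rightarrow> (int \<Rightarrow> 'u) \<Rightarrow> (int \<Rightarrow> 'x) \<Rightarrow> bool" where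
  "is_solution g X u x \<longleftrightarrow> (\<forall>n. x n \<in> X) \<and> (\<forall>n. x (n + 1) = g (u n) (x n))"

definition SI_invertible :: "('u \<Rightarrow> 'x \<Rightarrow> 'x) \<Rightarrow> 'u set \<Rightarrow> 'x set \<Rightarrow> bool" where
  "SI_invertible g U X \<longleftrightarrow> (\<forall>x\<in>X. inj_on (\<lambda>u. g u x) U)"

definition unique_solution_property :: "('u \<Rightarrow> 'x \<Rightarrow> 'x) \<Rightarrow> 'u set \<Rightarrow> 'x set \<Rightarrow> bool" where
  "unique_solution_property g U X \<longleftrightarrow>
     (\<forall>u. (\<forall>n. u n \<in> U) \<longrightarrow> (\<exists>!x. is_solution g X u x))"

definition is_orbit :: "('u \<Rightarrow> 'u) \<Rightarrow> 'u set \<Rightarrow> (int \<Rightarrow> 'u) \<Rightarrow> bool" where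
  "is_orbit T U u \<longleftrightarrow> (\<forall>n. u n \<in> U) \<and> (\<forall>n. u (n + 1) = T (u n))"

definition hmap :: "('u \<Rightarrow> 'x \<Rightarrow> 'x) \<Rightarrow> 'u set \<Rightarrow> 'x set \<Rightarrow> (nat \<Rightarrow> 'u) \<Rightarrow> 'x" where
  "hmap g U X s = (THE x0. \<exists>u x. (\<forall>n. u n \<in> U) \<and> (\<forall>k. u (- int k - 1) = s k)
                              \<and> is_solution g X u x \<and> x 0 = x0)"

definition rshift :: "(nat \<Rightarrow> 'u) \<Rightarrow> nat \<Rightarrow> 'u" where
  "rshift s = (\<lambda>k. s (Suc k))"

definition inv_limit :: "('u \<Rightarrow> 'u) \<Rightarrow> 'u set \<Rightarrow> (nat \<Rightarrow> 'u) set" where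
  "inv_limit T U = {s. (\<forall>k. s k \<in> U) \<and> (\<forall>k. T (s (Suc k)) = s k)}"

definition hatT :: "('u \<Rightarrow> 'u) \<Rightarrow> (nat \<Rightarrow> 'u) \<Rightarrow> nat \<Rightarrow> 'u" where
  "hatT T s = (\<lambda>k. case k of 0 \<Rightarrow> T (s 0) | Suc j \<Rightarrow> s j)"

definition Y_T :: "('u \<Rightarrow> 'x \<Rightarrow> 'x) \<Rightarrow> ('u \<Rightarrow> 'u) \<Rightarrow> 'u set \<Rightarrow> 'x set \<Rightarrow> ('x \<times> 'x) set" where
  "Y_T g T U X = {(x (n - 1), x n) | u x n. is_orbit T U u \<and> is_solution g X u x}"

definition G_T :: "('u \<Rightarrow> 'x \<Rightarrow> 'x) \<Rightarrow> ('u \<Rightarrow> 'u) \<Rightarrow> 'u set \<Rightarrow> 'x set \<Rightarrow> 'x \<times> 'x \<Rightarrow> 'x \<times> 'x" where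
  "G_T g T U X p = (THE q. \<exists>u x n. is_orbit T U u \<and> is_solution g X u x
                         \<and> p = (x (n - 1), x n) \<and> q = (x n, x (n + 1)))"

definition H2 :: "('u \<Rightarrow> 'x \<Rightarrow> 'x) \<Rightarrow> 'u set \<Rightarrow> 'x set \<Rightarrow> (nat \<Rightarrow> 'u) \<Rightarrow> 'x \<times> 'x" where
  "H2 g U X s = (hmap g U X (rshift s), hmap g U X s)"

definition proj_i :: "'n \<Rightarrow> (real^'n) \<times> (real^'n) \<Rightarrow> real \<times> real" where
  "proj_i i p = (fst p $ i, snd p $ i)"

definition koopman :: "('a \<Rightarrow> 'a) \<Rightarrow> ('a \<Rightarrow> 'b) \<Rightarrow> 'a \<Rightarrow> 'b" where
  "koopman S f = f \<circ> S"

end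

theory Submission
  imports Defs
begin

text \<open>Every point s of the inverse limit is the past of a T-orbit u, and if x is the solution
driven by u, the unique solution property gives h(past of u shifted by k) = x k. Hence
H2 s = (x (-1), x 0) and H2 (hatT T s) = (x 0, x 1). SI-invertibility makes G_T well defined
on Y_T, with G_T (x (-1), x 0) = (x 0, x 1).\<close>

definition past :: "(int \<Rightarrow> 'u) \<Rightarrow> nat \<Rightarrow> 'u" where
  "past u = (\<lambda>k. u (- int k - 1))"

lemma is_solution_shift:
  assumes "is_solution g X u x"
  shows "is_solution g X (\<lambda>n. u (n + k)) (\<lambda>n. x (n + k))"
proof -
  have "x (n + k + 1) = g (u (n + k)) (x (n + k))" for n
    using assms by (simp add: is_solution_def)
  then show ?thesis
    using assms by (simp add: is_solution_def ac_simps)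
qed

lemma past_shift_Suc:
  assumes "u 0 = T (u (-1))"
  shows "past (\<lambda>n. u (n + 1)) = hatT T (past u)"
proof
  fix k show "past (\<lambda>n. u (n + 1)) k = hatT T (past u) k"
    using assms by (cases k) (auto simp: past_def hatT_def intro!: arg_cong[where f = u])
qed

lemma rshift_past_shift: "rshift (past (\<lambda>n. u (n + k))) = past (\<lambda>n. u (n + (k - 1)))"
  by (simp add: rshift_def past_def algebra_simps)

lemma inv_limit_past_of_orbit:
  assumes "T ` U \<subseteq> U" and "s \<in> inv_limit T U"
  obtains u where "is_orbit T U u" and "past u = s"
proof
  have sU: "\<And>k. s k \<in> U" and sT: "\<And>k. T (s (Suc k)) = s k"
    using assms(2) by (auto simp: inv_limit_def)
  have TnU: "(T ^^ m) y \<in> U" if "y \<in> U" for m y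
    by (induction m) (use that assms(1) in auto)
  define u where "u n = (if n < 0 then s (nat (- n - 1)) else (T ^^ (nat n + 1)) (s 0))" for n
  have "u (n + 1) = T (u n)" for n
  proof -
    consider "n < -1" | "n = -1" | "n \<ge> 0" by linarith
    then show ?thesis
    proof cases
      case 1
      then have "nat (- n - 1) = Suc (nat (- (n + 1) - 1))" by simp
      then show ?thesis using 1 sT by (simp add: u_def)
    next
      case 2
      then show ?thesis by (simp add: u_def)
    next
      case 3
      then have "nat (n + 1) = Suc (nat n)" by simp
      then show ?thesis using 3 by (simp add: u_def)
    qed
  qed
  moreover have "u n \<in> U" for n
    using sU TnU[OF sU, of "Suc (nat n)"] by (simp add: u_def)
  ultimately show "is_orbit T U u"
    by (simp add: is_orbit_def)
  show "past u = s"
    by (simp add: past_def u_def)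
qed

text \<open>Run the solution x up to time 0, then continue it forward with the new input.\<close>
lemma is_solution_continue:
  assumes maps: "\<forall>u\<in>U. \<forall>x\<in>X. g u x \<in> X"
    and v_in: "\<forall>n. v n \<in> U" and agree: "\<forall>n<0. u n = v n"
    and sol: "is_solution g X u x"
  obtains y where "is_solution g X v y" and "y 0 = x 0"
proof
  define F where "F = rec_nat (x 0) (\<lambda>m y. g (v (int m)) y)"
  have F_Suc: "F (Suc m) = g (v (int m)) (F m)" for m
    by (simp add: F_def)
  have F_in: "F m \<in> X" for m
    by (induction m) (use sol maps v_in in \<open>auto simp: is_solution_def F_def\<close>)
  define y where "y n = (if n \<le> 0 then x n else F (nat n))" for n
  have "y (n + 1) = g (v n) (y n)" for n
  proof (cases "n < 0")
    case True
    then show ?thesis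
      using sol agree by (auto simp: y_def is_solution_def)
  next
    case False
    then have "nat (n + 1) = Suc (nat n)" by simp
    then show ?thesis
      using False F_Suc[of "nat n"] by (cases "n = 0") (auto simp: y_def F_def)
  qed
  moreover have "y n \<in> X" for n
    using sol F_in by (auto simp: y_def is_solution_def)
  ultimately show "is_solution g X v y"
    by (simp add: is_solution_def)
  show "y 0 = x 0"
    by (simp add: y_def)
qed

lemma solution_at_0_determined_by_past:
  assumes usp: "unique_solution_property g U X"
    and maps: "\<forall>u\<in>U. \<forall>x\<in>X. g u x \<in> X"
    and v_in: "\<forall>n. v n \<in> U" and agree: "\<forall>n<0. u n = v n"
    and sol_u: "is_solution g X u x" and sol_v: "is_solution g X v y"
  shows "y 0 = x 0"
proof -
  obtain z where sol_z: "is_solution g X v z" and "z 0 = x 0"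
    using is_solution_continue[OF maps v_in agree sol_u] .
  moreover have "z = y"
    using usp v_in sol_z sol_v unfolding unique_solution_property_def by blast
  ultimately show ?thesis by simp
qed

lemma hmap_past:
  assumes usp: "unique_solution_property g U X"
    and maps: "\<forall>u\<in>U. \<forall>x\<in>X. g u x \<in> X"
    and u_in: "\<forall>n. u n \<in> U" and sol: "is_solution g X u x"
  shows "hmap g U X (past u) = x 0"
  unfolding hmap_def
proof (rule the_equality)
  show "\<exists>v y. (\<forall>n. v n \<in> U) \<and> (\<forall>k. v (- int k - 1) = past u k) \<and> is_solution g X v y \<and> y 0 = x 0"
    using u_in sol by (auto simp: past_def)
next
  fix x0
  assume "\<exists>v y. (\<forall>n. v n \<in> U) \<and> (\<forall>k. v (- int k - 1) = past u k) \<and> is_solution g X v y \<and> y 0 = x0"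
  then obtain v y where v_in: "\<forall>n. v n \<in> U" and v_past: "\<forall>k. v (- int k - 1) = past u k"
    and sol_v: "is_solution g X v y" and "y 0 = x0"
    by blast
  have "u n = v n" if "n < 0" for n
    using v_past[rule_format, of "nat (- n - 1)"] that by (simp add: past_def)
  then have "y 0 = x 0"
    using solution_at_0_determined_by_past[OF usp maps v_in _ sol sol_v] by blast
  with \<open>y 0 = x0\<close> show "x0 = x 0" by simp
qed

lemma H2_past_shift:
  assumes usp: "unique_solution_property g U X"
    and maps: "\<forall>u\<in>U. \<forall>x\<in>X. g u x \<in> X"
    and u_in: "\<forall>n. u n \<in> U" and sol: "is_solution g X u x"
  shows "H2 g U X (past (\<lambda>n. u (n + k))) = (x (k - 1), x k)"
proof -
  have "hmap g U X (past (\<lambda>n. u (n + j))) = x j" for j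
    using hmap_past[OF usp maps _ is_solution_shift[OF sol, of j]] u_in by simp
  then show ?thesis
    by (simp add: H2_def rshift_past_shift)
qed

lemma G_T_solution:
  assumes SI: "SI_invertible g U X"
    and orb: "is_orbit T U u" and sol: "is_solution g X u x"
  shows "G_T g T U X (x (n - 1), x n) = (x n, x (n + 1))"
  unfolding G_T_def
proof (rule the_equality)
  show "\<exists>v y m. is_orbit T U v \<and> is_solution g X v y
      \<and> (x (n - 1), x n) = (y (m - 1), y m) \<and> (x n, x (n + 1)) = (y m, y (m + 1))"
    using orb sol by (intro exI[of _ u] exI[of _ x] exI[of _ n]) simp
next
  fix q
  assume "\<exists>v y m. is_orbit T U v \<and> is_solution g X v y
      \<and> (x (n - 1), x n) = (y (m - 1), y m) \<and> q = (y m, y (m + 1))"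
  then obtain v y m where orb_v: "is_orbit T U v" and sol_v: "is_solution g X v y"
    and prev: "y (m - 1) = x (n - 1)" and cur: "y m = x n" and q: "q = (y m, y (m + 1))"
    by auto
  have step_x: "\<And>j. x (j + 1) = g (u j) (x j)" and x_in: "\<And>j. x j \<in> X"
    and step_y: "\<And>j. y (j + 1) = g (v j) (y j)"
    using sol sol_v by (auto simp: is_solution_def)
  have "g (v (m - 1)) (x (n - 1)) = g (u (n - 1)) (x (n - 1))"
    using step_x[of "n - 1"] step_y[of "m - 1"] prev cur by simp
  then have "v (m - 1) = u (n - 1)"
    using SI x_in orb orb_v unfolding SI_invertible_def inj_on_def is_orbit_def by blast
  then have "v m = u n"
    using orb orb_v unfolding is_orbit_def by (metis diff_add_cancel)
  then show "q = (x n, x (n + 1))"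
    using q cur step_x[of n] step_y[of m] by simp
qed

theorem corollary1:
  fixes U :: "'u::metric_space set"
    and X :: "(real^'n) set"
    and T :: "'u \<Rightarrow> 'u"
    and g :: "'u \<Rightarrow> real^'n \<Rightarrow> real^'n"
  assumes "compact U"
    and "compact X"
    and TU: "T ` U = U"
    and "continuous_on (U \<times> X) (\<lambda>(u, x). g u x)"
    and maps: "\<forall>u\<in>U. \<forall>x\<in>X. g u x \<in> X"
    and SI: "SI_invertible g U X"
    and usp: "unique_solution_property g U X"
  shows "\<forall>i. \<forall>s\<in>inv_limit T U.
           koopman (hatT T) (proj_i i \<circ> H2 g U X) s
             = (proj_i i \<circ> G_T g T U X \<circ> H2 g U X) s"
proof (intro allI ballI)
  fix i s
  assume "s \<in> inv_limit T U"
  with TU obtain u where orb: "is_orbit T U u" and s: "s = past u"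
    by (metis inv_limit_past_of_orbit order_refl)
  have u_in: "\<forall>n. u n \<in> U" and u_step: "\<And>n. u (n + 1) = T (u n)"
    using orb by (auto simp: is_orbit_def)
  have hatT_s: "hatT T s = past (\<lambda>n. u (n + 1))"
    using past_shift_Suc[of u T] u_step[of "-1"] by (simp add: s)
  obtain x where sol: "is_solution g X u x"
    using usp u_in unfolding unique_solution_property_def by blast
  have "H2 g U X (hatT T s) = (x 0, x 1)"
    using H2_past_shift[OF usp maps u_in sol, of 1] by (simp add: hatT_s)
  moreover have "H2 g U X s = (x (-1), x 0)"
    using H2_past_shift[OF usp maps u_in sol, of 0] by (simp add: s)
  moreover have "G_T g T U X (x (-1), x 0) = (x 0, x 1)"
    using G_T_solution[OF SI orb sol, of 0] by simp
  ultimately show "koopman (hatT T) (proj_i i \<circ> H2 g U X) s = (proj_i i \<circ> G_T g T U X \<circ> H2 g U X) s"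
    by (simp add: koopman_def)
qed

end
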